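(* Let $\rho\in\mathfrak M_d$ with $\Sigma=\Sigma(\rho)$ invertible, and let $\theta\in\Delta_d$ with all $n\theta_i$ integers. In the fixed-composition model the canonical estimator $\widehat\theta_\rho$ is unbiased and $$R^{\mathrm{fc}}_\theta(\rho)=\frac1n\sum_{i=1}^d\theta_i\Big[\operatorname{tr}\bigl(\Sigma^{-1}B_i(\rho)\Sigma^{-1}\bigr)-\frac{d-1}{d}\Big].$$ Consequently $\theta\mapsto R^{\mathrm{fc}}_\theta(\rho)$ is (the restriction of) an affine function, its supremum over admissible $\theta$ equals $\max_i R^{\mathrm{fc}}_{e_i}(\rho)$, and $$\frac1d\sum_{i=1}^d R^{\mathrm{fc}}_{e_i}(\rho)=\frac1n\Big[\operatorname{tr}\Sigma(\rho)^{-1}-\frac{d-1}{d}\Big].$$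
   Context: Fix $d\ge2$. Let $H\in\mathbb R^{d\times(d-1)}$ have orthonormal columns spanning $\{u\in\mathbb R^d:\mathbf 1^\top u=0\}$, $\gamma_i:=H^\top e_i$, $\mathcal X_d:=\{x\in\mathbb R^{d-1}:1+\gamma_i^\top x\ge0\ \forall i\}$, $\Delta_d$ the probability simplex in $\mathbb R^d$. An anchored law is a Borel probability measure $\rho$ on $\mathcal X_d$ with $\int x\,\rho(dx)=0$; $\mathfrak M_d$ is the set of anchored laws; $W_\rho(B\mid i):=\int_B(1+\gamma_i^\top x)\rho(dx)$. Define $\Sigma(\rho):=\int xx^\top\rho(dx)$ and $B_i(\rho):=\int(1+\gamma_i^\top x)xx^\top\rho(dx)$. Fixed-composition model: given $n\ge1$ and $\theta\in\Delta_d$ with $n\theta_i\in\mathbb Z$, $X_1,\dots,X_n$ are independent with exactly $n\theta_i$ of them drawn from $W_\rho(\cdot\mid i)$. The canonical estimator is $\widehat\theta_\rho:=\mathbf 1/d+H\Sigma(\rho)^{-1}\bar X$, $\bar X:=\frac1n\sum_m X_m$, and $R^{\mathrm{fc}}_\theta(\rho):=\mathbb E_\theta\|\widehat\theta_\rho-\theta\|_2^2$ in this model. *)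

theory Defs
  imports "HOL-Probability.Probability"
begin

text \<open>Dimensions: 'd indexes coordinates of R^d, 'k indexes coordinates of R^(d-1)
  (the statement assumes CARD('d) = CARD('k) + 1).\<close>

definition gam :: "real^'k^'d \<Rightarrow> 'd \<Rightarrow> real^'k" where
  "gam H i = row i H"

definition Xd :: "real^'k^'d \<Rightarrow> (real^'k) set" where
  "Xd H = {x. \<forall>i. 0 \<le> 1 + gam H i \<bullet> x}"

definition anchored :: "real^'k^'d \<Rightarrow> (real^'k) measure \<Rightarrow> bool" where
  "anchored H \<rho> \<longleftrightarrow> prob_space \<rho> \<and> sets \<rho> = sets borel \<and>
     emeasure \<rho> (Xd H) = 1 \<and> integral\<^sup>L \<rho> (\<lambda>x. x) = 0"

definition Wcond :: "real^'k^'d \<Rightarrow> (real^'k) measure \<Rightarrow> 'd \<Rightarrow> (real^'k) measure" where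
  "Wcond H \<rho> i = density \<rho> (\<lambda>x. ennreal (1 + gam H i \<bullet> x))"

definition outer :: "real^'k \<Rightarrow> real^'k \<Rightarrow> real^'k^'k" where
  "outer x y = (\<chi> a b. x$a * y$b)"

definition Sig :: "(real^'k) measure \<Rightarrow> real^'k^'k" where
  "Sig \<rho> = integral\<^sup>L \<rho> (\<lambda>x. outer x x)"

definition Bmat :: "real^'k^'d \<Rightarrow> (real^'k) measure \<Rightarrow> 'd \<Rightarrow> real^'k^'k" where
  "Bmat H \<rho> i = integral\<^sup>L \<rho> (\<lambda>x. (1 + gam H i \<bullet> x) *\<^sub>R outer x x)"

definition admissible :: "nat \<Rightarrow> real^'d \<Rightarrow> bool" where
  "admissible n \<theta> \<longleftrightarrow> (\<forall>i. 0 \<le> \<theta>$i) \<and> (\<Sum>i\<in>UNIV. \<theta>$i) = 1 \<and>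
     (\<forall>i. real n * \<theta>$i \<in> \<int>)"

text \<open>An assignment c: sample m (m < n) is drawn from W(.|c m); exactly n*theta_i
  samples are drawn from W(.|i).\<close>
definition composition :: "nat \<Rightarrow> real^'d \<Rightarrow> (nat \<Rightarrow> 'd) \<Rightarrow> bool" where
  "composition n \<theta> c \<longleftrightarrow> (\<forall>i. real (card {m. m < n \<and> c m = i}) = real n * \<theta>$i)"

definition fc_law :: "real^'k^'d \<Rightarrow> (real^'k) measure \<Rightarrow> nat \<Rightarrow> (nat \<Rightarrow> 'd)
    \<Rightarrow> (nat \<Rightarrow> real^'k) measure" where
  "fc_law H \<rho> n c = PiM {..<n} (\<lambda>m. Wcond H \<rho> (c m))"

definition est :: "real^'k^'d \<Rightarrow> (real^'k) measure \<Rightarrow> nat \<Rightarrow> (nat \<Rightarrow> real^'k) \<Rightarrow> real^'d" where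
  "est H \<rho> n X = (\<chi> i. 1 / real CARD('d)) +
     H *v (matrix_inv (Sig \<rho>) *v ((1 / real n) *\<^sub>R (\<Sum>m<n. X m)))"

definition fc_risk :: "real^'k^'d \<Rightarrow> (real^'k) measure \<Rightarrow> nat \<Rightarrow> real^'d \<Rightarrow> (nat \<Rightarrow> 'd) \<Rightarrow> real" where
  "fc_risk H \<rho> n \<theta> c = (\<integral>X. (norm (est H \<rho> n X - \<theta>))\<^sup>2 \<partial>fc_law H \<rho> n c)"

text \<open>R^fc_theta(rho): risk for some assignment realising composition theta
  (the theorem shows it does not depend on the choice).\<close>
definition R_fc :: "real^'k^'d \<Rightarrow> (real^'k) measure \<Rightarrow> nat \<Rightarrow> real^'d \<Rightarrow> real" where
  "R_fc H \<rho> n \<theta> = fc_risk H \<rho> n \<theta> (SOME c. composition n \<theta> c)"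

end

theory Submission
  imports Defs
begin

text \<open>Write \<open>A = \<Sigma>(\<rho>)\<inverse>\<close>. Since \<open>H H\<^sup>T\<close> is the projection onto the sum-zero hyperplane, the
  canonical estimator errs by \<open>(1/n) H \<Sum>\<^sub>m (A X\<^sub>m - \<gamma>\<^sub>c\<^sub>m)\<close>, where \<open>c\<^sub>m\<close> is the label of
  sample \<open>m\<close>. Under \<open>W\<^sub>\<rho>(\<cdot>|i)\<close> the mean of \<open>X\<close> is \<open>\<Sigma> \<gamma>\<^sub>i\<close>, so the summands are independent
  and centred; as \<open>H\<close> is an isometry, the risk is \<open>n\<^sup>-\<^sup>2\<close> times the sum of their second moments
  \<open>tr(A B\<^sub>i A) - |\<gamma>\<^sub>i|\<^sup>2\<close>, with \<open>|\<gamma>\<^sub>i|\<^sup>2 = (d-1)/d\<close>. Grouping the samples by label makes the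
  risk affine in \<open>\<theta>\<close>, so its supremum over the simplex is attained at a vertex, and
  \<open>\<Sum>\<^sub>i B\<^sub>i = d \<Sigma>\<close> turns the average over the vertices into \<open>tr A\<close>.\<close>

lemma matrix_inv_right:
  fixes A :: "'a::semiring_1^'n^'m"
  assumes "invertible A"
  shows "A ** matrix_inv A = mat 1"
  using someI_ex[OF assms[unfolded invertible_def]] by (simp add: matrix_inv_def)

lemma matrix_inv_left:
  fixes A :: "'a::semiring_1^'n^'m"
  assumes "invertible A"
  shows "matrix_inv A ** A = mat 1"
  using someI_ex[OF assms[unfolded invertible_def]] by (simp add: matrix_inv_def)

lemma transpose_matrix_inv_symmetric:
  fixes A :: "'a::comm_semiring_1^'n^'n"
  assumes "invertible A" and "transpose A = A"
  shows "transpose (matrix_inv A) = matrix_inv A"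
proof -
  have "transpose (matrix_inv A) ** A = mat 1"
    by (metis assms(2) matrix_inv_right[OF assms(1)] matrix_transpose_mul transpose_mat)
  then show ?thesis
    by (metis matrix_inv_right[OF assms(1)] matrix_mul_assoc matrix_mul_lid matrix_mul_rid)
qed

lemma span_columns_eq_range:
  fixes A :: "real^'n^'m"
  shows "span (columns A) = range (\<lambda>x. A *v x)"
proof
  have "subspace (range (\<lambda>x. A *v x))"
    using linear_subspace_image[OF matrix_vector_mul_linear subspace_UNIV] by (simp add: image_def)
  moreover have "columns A \<subseteq> range (\<lambda>x. A *v x)"
    by (auto simp: columns_image_basis)
  ultimately show "span (columns A) \<subseteq> range (\<lambda>x. A *v x)"
    by (simp add: span_minimal)
  show "range (\<lambda>x. A *v x) \<subseteq> span (columns A)"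
    using matrix_vector_mult_in_columnspace by blast
qed

lemma norm_mult_vec_isometry:
  fixes A :: "real^'n^'m"
  assumes "transpose A ** A = mat 1"
  shows "norm (A *v x) = norm x"
proof -
  have "(A *v x) \<bullet> (A *v x) = x \<bullet> x"
    by (metis assms dot_lmul_matrix matrix_vector_mul_assoc matrix_vector_mul_lid vector_transpose_matrix)
  then show ?thesis by (simp add: norm_eq_sqrt_inner)
qed

lemma outer_mult_vec: "outer x y *v v = (y \<bullet> v) *\<^sub>R x"
  by (simp add: vec_eq_iff outer_def matrix_vector_mult_def inner_vec_def sum_distrib_left mult_ac)

lemma transpose_outer: "transpose (outer x y) = outer y x"
  by (simp add: vec_eq_iff transpose_def outer_def mult.commute)

lemma trace_mult_outer_mult:
  fixes A B :: "real^'n^'n"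
  shows "trace (A ** outer x y ** B) = (A *v x) \<bullet> (transpose B *v y)"
  by (simp add: trace_def matrix_matrix_mult_def outer_def matrix_vector_mult_def inner_vec_def
      transpose_def sum_distrib_left sum_distrib_right mult_ac)

lemma continuous_on_outer [continuous_intros]:
  fixes f g :: "'a::topological_space \<Rightarrow> real^'n"
  assumes "continuous_on S f" and "continuous_on S g"
  shows "continuous_on S (\<lambda>x. outer (f x) (g x))"
  unfolding outer_def using assms by (intro continuous_intros)

lemma linear_trace_mult_mult:
  fixes A B :: "real^'n^'n"
  shows "linear (\<lambda>M. trace (A ** M ** B))"
  by (rule linearI)
    (simp_all add: trace_def matrix_matrix_mult_def sum.distrib sum_distrib_left algebra_simps)

lemma linear_mult_vec_left: "linear (\<lambda>M::real^'n^'m. M *v v)"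
  by (rule linearI)
    (simp_all add: vec_eq_iff matrix_vector_mult_def sum.distrib sum_distrib_left algebra_simps)

lemma linear_transpose: "linear (transpose :: real^'n^'m \<Rightarrow> real^'m^'n)"
  by (rule linearI) (simp_all add: vec_eq_iff transpose_def)

lemma integral_linear:
  fixes T :: "'a::euclidean_space \<Rightarrow> 'b::euclidean_space"
  assumes "linear T" and "integrable M f"
  shows "integral\<^sup>L M (\<lambda>x. T (f x)) = T (integral\<^sup>L M f)"
  using assms by (simp add: integral_bounded_linear linear_conv_bounded_linear)

lemma
  fixes f :: "'a \<Rightarrow> 'b::{banach,second_countable_topology}"
  assumes "\<And>j. prob_space (M j)" and "i \<in> I" and "integrable (M i) f"
  shows integrable_PiM_component: "integrable (Pi\<^sub>M I M) (\<lambda>X. f (X i))"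
    and integral_PiM_component: "(\<integral>X. f (X i) \<partial>Pi\<^sub>M I M) = integral\<^sup>L (M i) f"
proof -
  have distr_eq: "distr (Pi\<^sub>M I M) (M i) (\<lambda>X. X i) = M i"
    using assms(1,2) by (intro distr_PiM_component)
  have component_measurable: "(\<lambda>X. X i) \<in> measurable (Pi\<^sub>M I M) (M i)"
    using assms(2) by (rule measurable_component_singleton)
  have f_measurable: "f \<in> borel_measurable (M i)"
    using assms(3) by simp
  show "integrable (Pi\<^sub>M I M) (\<lambda>X. f (X i))"
    using integrable_distr_eq[OF component_measurable f_measurable] distr_eq assms(3) by simp
  show "(\<integral>X. f (X i) \<partial>Pi\<^sub>M I M) = integral\<^sup>L (M i) f"
    using integral_distr[OF component_measurable f_measurable] distr_eq by simp
qed

lemma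
  fixes g :: "'i \<Rightarrow> 'a \<Rightarrow> real"
  assumes "\<And>i. prob_space (M i)" and "finite I" and "J \<subseteq> I"
    and "\<And>j. j \<in> J \<Longrightarrow> integrable (M j) (g j)"
  shows integrable_PiM_prod: "integrable (Pi\<^sub>M I M) (\<lambda>X. \<Prod>j\<in>J. g j (X j))"
    and integral_PiM_prod: "(\<integral>X. (\<Prod>j\<in>J. g j (X j)) \<partial>Pi\<^sub>M I M) = (\<Prod>j\<in>J. integral\<^sup>L (M j) (g j))"
proof -
  interpret product_prob_space M I
    using assms(1) by (simp add: product_prob_space_def product_prob_space_axioms_def
        product_sigma_finite_def prob_space_imp_sigma_finite)
  define h where "h = (\<lambda>j x. if j \<in> J then g j x else 1)"
  have h_integrable: "integrable (M j) (h j)" for j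
    using assms(4) by (cases "j \<in> J") (simp_all add: h_def)
  have prod_h: "(\<Prod>j\<in>I. h j (X j)) = (\<Prod>j\<in>J. g j (X j))" for X
    using assms(2,3) by (simp add: h_def prod.inter_restrict[symmetric] Int_absorb1)
  show "integrable (Pi\<^sub>M I M) (\<lambda>X. \<Prod>j\<in>J. g j (X j))"
    using product_integrable_prod[OF assms(2) h_integrable] by (simp add: prod_h)
  have "integral\<^sup>L (M j) (h j) = (if j \<in> J then integral\<^sup>L (M j) (g j) else 1)" for j
    by (simp add: h_def M.prob_space)
  then have "(\<Prod>j\<in>I. integral\<^sup>L (M j) (h j)) = (\<Prod>j\<in>J. integral\<^sup>L (M j) (g j))"
    using assms(2,3) by (simp add: prod.inter_restrict[symmetric] Int_absorb1)
  then show "(\<integral>X. (\<Prod>j\<in>J. g j (X j)) \<partial>Pi\<^sub>M I M) = (\<Prod>j\<in>J. integral\<^sup>L (M j) (g j))"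
    using product_integral_prod[OF assms(2) h_integrable] by (simp add: prod_h)
qed

lemma
  fixes F :: "'i \<Rightarrow> 'a \<Rightarrow> 'b::euclidean_space"
  assumes prob: "\<And>i. prob_space (M i)" and fin: "finite I"
    and "i \<in> I" and "j \<in> I" and "i \<noteq> j"
    and "integrable (M i) (F i)" and "integrable (M j) (F j)"
  shows integrable_PiM_inner: "integrable (Pi\<^sub>M I M) (\<lambda>X. F i (X i) \<bullet> F j (X j))"
    and integral_PiM_inner:
      "(\<integral>X. F i (X i) \<bullet> F j (X j) \<partial>Pi\<^sub>M I M) = integral\<^sup>L (M i) (F i) \<bullet> integral\<^sup>L (M j) (F j)"
proof -
  have components: "F i (X i) \<bullet> F j (X j) = (\<Sum>b\<in>Basis. \<Prod>k\<in>{i, j}. F k (X k) \<bullet> b)" for X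
    using assms(5) by (subst euclidean_inner) simp
  have "integrable (M k) (\<lambda>x. F k x \<bullet> b)" if "k \<in> {i, j}" for k b
    using that assms(6,7) by auto
  then have product: "integrable (Pi\<^sub>M I M) (\<lambda>X. \<Prod>k\<in>{i, j}. F k (X k) \<bullet> b)"
    "(\<integral>X. (\<Prod>k\<in>{i, j}. F k (X k) \<bullet> b) \<partial>Pi\<^sub>M I M) = (\<Prod>k\<in>{i, j}. \<integral>x. F k x \<bullet> b \<partial>M k)" for b
    using integrable_PiM_prod[where M=M and J="{i, j}" and g="\<lambda>k x. F k x \<bullet> b", OF prob fin]
      integral_PiM_prod[where M=M and J="{i, j}" and g="\<lambda>k x. F k x \<bullet> b", OF prob fin]
      assms(3,4) by auto
  show "integrable (Pi\<^sub>M I M) (\<lambda>X. F i (X i) \<bullet> F j (X j))"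
    unfolding components using product(1) assms(3,4) by (intro Bochner_Integration.integrable_sum) auto
  have "(\<integral>X. F i (X i) \<bullet> F j (X j) \<partial>Pi\<^sub>M I M)
      = (\<Sum>b\<in>Basis. (integral\<^sup>L (M i) (F i) \<bullet> b) * (integral\<^sup>L (M j) (F j) \<bullet> b))"
    unfolding components using product assms(3-7)
    by (simp add: Bochner_Integration.integral_sum Bochner_Integration.integrable_sum)
  then show "(\<integral>X. F i (X i) \<bullet> F j (X j) \<partial>Pi\<^sub>M I M) = integral\<^sup>L (M i) (F i) \<bullet> integral\<^sup>L (M j) (F j)"
    using euclidean_inner[of "integral\<^sup>L (M i) (F i)" "integral\<^sup>L (M j) (F j)"] by simp
qed

lemma
  fixes F :: "'i \<Rightarrow> 'a \<Rightarrow> 'b::euclidean_space"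
  assumes prob: "\<And>i. prob_space (M i)" and fin: "finite I"
    and integrable_F: "\<And>i. i \<in> I \<Longrightarrow> integrable (M i) (F i)"
    and integrable_sq: "\<And>i. i \<in> I \<Longrightarrow> integrable (M i) (\<lambda>x. (norm (F i x))\<^sup>2)"
    and centred: "\<And>i. i \<in> I \<Longrightarrow> integral\<^sup>L (M i) (F i) = 0"
  shows integrable_PiM_norm_sum_sq: "integrable (Pi\<^sub>M I M) (\<lambda>X. (norm (\<Sum>i\<in>I. F i (X i)))\<^sup>2)"
    and integral_PiM_norm_sum_sq:
      "(\<integral>X. (norm (\<Sum>i\<in>I. F i (X i)))\<^sup>2 \<partial>Pi\<^sub>M I M) = (\<Sum>i\<in>I. \<integral>x. (norm (F i x))\<^sup>2 \<partial>M i)"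
proof -
  have expand: "(\<lambda>X. (norm (\<Sum>i\<in>I. F i (X i)))\<^sup>2) = (\<lambda>X. \<Sum>i\<in>I. \<Sum>j\<in>I. F i (X i) \<bullet> F j (X j))"
    by (rule ext, simp add: power2_norm_eq_inner inner_sum_left inner_sum_right) (rule sum.swap)
  have pair: "integrable (Pi\<^sub>M I M) (\<lambda>X. F i (X i) \<bullet> F j (X j)) \<and>
      (\<integral>X. F i (X i) \<bullet> F j (X j) \<partial>Pi\<^sub>M I M) = (if i = j then \<integral>x. (norm (F i x))\<^sup>2 \<partial>M i else 0)"
    if "i \<in> I" and "j \<in> I" for i j
  proof (cases "i = j")
    case True
    then show ?thesis
      using integrable_PiM_component[where M=M, OF prob \<open>i \<in> I\<close> integrable_sq[OF \<open>i \<in> I\<close>]]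
        integral_PiM_component[where M=M, OF prob \<open>i \<in> I\<close> integrable_sq[OF \<open>i \<in> I\<close>]]
      by (simp add: power2_norm_eq_inner)
  next
    case False
    then show ?thesis
      using integrable_PiM_inner[where M=M and F=F, OF prob fin that False]
        integral_PiM_inner[where M=M and F=F, OF prob fin that False] that
      by (simp add: integrable_F centred)
  qed
  show "integrable (Pi\<^sub>M I M) (\<lambda>X. (norm (\<Sum>i\<in>I. F i (X i)))\<^sup>2)"
    unfolding expand using pair by (intro Bochner_Integration.integrable_sum) auto
  have "(\<integral>X. (norm (\<Sum>i\<in>I. F i (X i)))\<^sup>2 \<partial>Pi\<^sub>M I M)
      = (\<Sum>i\<in>I. \<Sum>j\<in>I. if i = j then \<integral>x. (norm (F i x))\<^sup>2 \<partial>M i else 0)"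
    unfolding expand using pair
    by (simp add: Bochner_Integration.integral_sum Bochner_Integration.integrable_sum)
  then show "(\<integral>X. (norm (\<Sum>i\<in>I. F i (X i)))\<^sup>2 \<partial>Pi\<^sub>M I M) = (\<Sum>i\<in>I. \<integral>x. (norm (F i x))\<^sup>2 \<partial>M i)"
    using fin by simp
qed

lemma mult_vec_nth_eq_inner_gam:
  fixes H :: "real^'k^'d"
  shows "(H *v x) $ i = gam H i \<bullet> x"
  by (simp add: gam_def row_def matrix_vector_mult_def inner_vec_def)

lemma transpose_mult_vec_eq_sum_gam:
  fixes H :: "real^'k^'d"
  shows "transpose H *v \<theta> = (\<Sum>i\<in>UNIV. \<theta> $ i *\<^sub>R gam H i)"
  by (simp add: vec_eq_iff gam_def row_def matrix_vector_mult_def transpose_def sum_component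
      mult.commute)

lemma transpose_mult_axis:
  fixes H :: "real^'k^'d"
  shows "transpose H *v axis i 1 = gam H i"
proof -
  have "(\<Sum>j\<in>UNIV. (axis i 1 :: real^'d) $ j *\<^sub>R gam H j) = (\<Sum>j\<in>UNIV. if j = i then gam H j else 0)"
    by (rule sum.cong) (auto simp: axis_def)
  then show ?thesis by (simp only: transpose_mult_vec_eq_sum_gam) simp
qed

locale sum_zero_basis =
  fixes H :: "real^'k^'d"
  assumes orthonormal_columns: "\<forall>j j'. column j H \<bullet> column j' H = (if j = j' then 1 else 0)"
    and span_columns: "span (columns H) = {u. (\<Sum>i\<in>UNIV. u$i) = 0}"
begin

lemma transpose_H_mult_H: "transpose H ** H = mat 1"
  using orthonormal_columns by (simp add: matrix_mult_transpose_dot_column vec_eq_iff mat_def)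

lemma norm_H_mult_vec: "norm (H *v v) = norm v"
  by (rule norm_mult_vec_isometry[OF transpose_H_mult_H])

lemma transpose_H_mult_ones: "transpose H *v (\<chi> i. 1) = 0"
proof -
  have "column j H \<in> span (columns H)" for j
    by (auto simp: columns_def intro!: span_base)
  then have "(\<Sum>i\<in>UNIV. H$i$j) = 0" for j
    using span_columns by (simp add: column_def)
  then show ?thesis
    by (simp add: vec_eq_iff matrix_vector_mult_def transpose_def)
qed

lemma H_mult_transpose_H_mult:
  "H *v (transpose H *v u) = u - ((\<Sum>i\<in>UNIV. u$i) / real CARD('d)) *\<^sub>R (\<chi> i. 1)"
proof -
  define c where "c = (\<Sum>i\<in>UNIV. u$i) / real CARD('d)"
  have "(\<Sum>i\<in>UNIV. (u - c *\<^sub>R (\<chi> i. 1))$i) = 0"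
    by (simp add: c_def sum_subtractf)
  then obtain w where w: "u - c *\<^sub>R (\<chi> i. 1) = H *v w"
    using span_columns span_columns_eq_range by blast
  then have "transpose H *v u = transpose H *v (H *v w) + c *\<^sub>R (transpose H *v (\<chi> i. 1))"
    by (metis diff_add_cancel matrix_vector_mult_scaleR matrix_vector_right_distrib)
  also have "\<dots> = w"
    by (simp add: transpose_H_mult_ones matrix_vector_mul_assoc transpose_H_mult_H
        del: transpose_matrix_vector)
  finally show ?thesis
    using w c_def by simp
qed

lemma sum_gam: "(\<Sum>i\<in>UNIV. gam H i) = 0"
  using transpose_H_mult_ones transpose_mult_vec_eq_sum_gam[of H "\<chi> i. 1"] by simp

lemma inner_gam_self: "gam H i \<bullet> gam H i = (real CARD('d) - 1) / real CARD('d)"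
proof -
  have "gam H i \<bullet> gam H i = (H *v (transpose H *v axis i 1)) $ i"
    by (simp only: transpose_mult_axis mult_vec_nth_eq_inner_gam)
  also have "\<dots> = 1 - 1 / real CARD('d)"
    by (simp only: H_mult_transpose_H_mult) (simp add: axis_def)
  finally show ?thesis
    by (simp add: diff_divide_distrib)
qed

lemma sum_weights: "(\<Sum>i\<in>UNIV. 1 + gam H i \<bullet> x) = real CARD('d)"
  by (simp add: sum.distrib flip: inner_sum_left) (simp add: sum_gam)

lemma norm_le_if_in_Xd:
  assumes "x \<in> Xd H"
  shows "norm x \<le> real CARD('d) * real CARD('d)"
proof -
  have weight_nonneg: "0 \<le> 1 + gam H i \<bullet> x" for i
    using assms by (simp add: Xd_def)
  have weight_le: "1 + gam H i \<bullet> x \<le> real CARD('d)" for i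
    using member_le_sum[of i UNIV "\<lambda>i. 1 + gam H i \<bullet> x"] weight_nonneg sum_weights by simp
  have "1 \<le> real CARD('d)"
    by simp
  then have "\<bar>(H *v x) $ i\<bar> \<le> real CARD('d)" for i
    using weight_nonneg[of i] weight_le[of i] unfolding mult_vec_nth_eq_inner_gam by arith
  then have "(\<Sum>i\<in>UNIV. \<bar>(H *v x) $ i\<bar>) \<le> real CARD('d) * real CARD('d)"
    using sum_mono[of UNIV "\<lambda>i. \<bar>(H *v x) $ i\<bar>" "\<lambda>_. real CARD('d)"] by simp
  then show ?thesis
    using norm_le_l1_cart[of "H *v x"] norm_H_mult_vec by simp
qed

end

locale anchored_law = sum_zero_basis H for H :: "real^'k^'d" +
  fixes \<rho> :: "(real^'k) measure"
  assumes anchored: "anchored H \<rho>"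
begin

sublocale prob_space \<rho>
  using anchored by (simp add: anchored_def)

lemma sets_rho: "sets \<rho> = sets borel"
  using anchored by (simp add: anchored_def)

lemma integral_rho_id: "integral\<^sup>L \<rho> (\<lambda>x. x) = 0"
  using anchored by (simp add: anchored_def)

lemma AE_in_Xd: "AE x in \<rho>. x \<in> Xd H"
proof -
  have "Xd H \<in> sets borel"
    unfolding Xd_def by measurable
  moreover have "prob (Xd H) = 1"
    using anchored by (simp add: anchored_def measure_def)
  ultimately show ?thesis
    by (simp add: AE_in_set_eq_1 sets_rho)
qed

lemma borel_measurable_continuous:
  assumes "continuous_on UNIV f"
  shows "f \<in> borel_measurable \<rho>"
  using borel_measurable_continuous_onI[OF assms] measurable_cong_sets[OF sets_rho refl] by blast

text \<open>An anchored law lives on the bounded set \<open>Xd H\<close>, so continuous functions are bounded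
  \<open>\<rho>\<close>-almost everywhere.\<close>

lemma integrable_continuous:
  fixes f :: "real^'k \<Rightarrow> 'b::{banach,second_countable_topology}"
  assumes "continuous_on UNIV f"
  shows "integrable \<rho> f"
proof -
  define r where "r = real CARD('d) * real CARD('d)"
  have "compact (f ` cball 0 r)"
    by (intro compact_continuous_image continuous_on_subset[OF assms]) auto
  then obtain B where B: "\<And>x. x \<in> cball 0 r \<Longrightarrow> norm (f x) \<le> B"
    by (meson compact_imp_bounded bounded_iff imageI)
  have "AE x in \<rho>. norm (f x) \<le> B"
    using AE_in_Xd by eventually_elim (use B norm_le_if_in_Xd r_def in auto)
  then show ?thesis
    by (rule integrable_const_bound) (rule borel_measurable_continuous[OF assms])
qed

lemma integral_weight: "integral\<^sup>L \<rho> (\<lambda>x. 1 + gam H i \<bullet> x) = 1"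
proof -
  have "integrable \<rho> (\<lambda>x. x)"
    by (rule integrable_continuous) (rule continuous_on_id)
  then show ?thesis
    using integral_rho_id by (simp add: prob_space)
qed

lemma
  fixes f :: "real^'k \<Rightarrow> 'b::{banach,second_countable_topology}"
  assumes "continuous_on UNIV f"
  shows integrable_Wcond: "integrable (Wcond H \<rho> i) f"
    and integral_Wcond: "integral\<^sup>L (Wcond H \<rho> i) f = (\<integral>x. (1 + gam H i \<bullet> x) *\<^sub>R f x \<partial>\<rho>)"
proof -
  have weight_measurable: "(\<lambda>x. 1 + gam H i \<bullet> x) \<in> borel_measurable \<rho>"
    by (rule borel_measurable_continuous) (intro continuous_intros)
  have weight_nonneg: "AE x in \<rho>. 0 \<le> 1 + gam H i \<bullet> x"
    using AE_in_Xd by eventually_elim (simp add: Xd_def)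
  have "integrable \<rho> (\<lambda>x. (1 + gam H i \<bullet> x) *\<^sub>R f x)"
    by (intro integrable_continuous continuous_intros assms)
  then show "integrable (Wcond H \<rho> i) f"
    unfolding Wcond_def
    using integrable_density[OF borel_measurable_continuous[OF assms] weight_measurable weight_nonneg]
    by simp
  show "integral\<^sup>L (Wcond H \<rho> i) f = (\<integral>x. (1 + gam H i \<bullet> x) *\<^sub>R f x \<partial>\<rho>)"
    unfolding Wcond_def
    by (rule integral_density[OF borel_measurable_continuous[OF assms] weight_measurable weight_nonneg])
qed

lemma prob_space_Wcond: "prob_space (Wcond H \<rho> i)"
proof
  have "(\<lambda>x. 1 + gam H i \<bullet> x) \<in> borel_measurable \<rho>"
    by (rule borel_measurable_continuous) (intro continuous_intros)
  then have "emeasure (Wcond H \<rho> i) (space (Wcond H \<rho> i)) = (\<integral>\<^sup>+ x. ennreal (1 + gam H i \<bullet> x) \<partial>\<rho>)"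
    unfolding Wcond_def by (subst emeasure_density) (auto intro!: nn_integral_cong)
  also have "\<dots> = ennreal (integral\<^sup>L \<rho> (\<lambda>x. 1 + gam H i \<bullet> x))"
    using AE_in_Xd
    by (intro nn_integral_eq_integral integrable_continuous continuous_intros)
      (auto elim!: eventually_mono simp: Xd_def)
  finally show "emeasure (Wcond H \<rho> i) (space (Wcond H \<rho> i)) = 1"
    by (simp add: integral_weight)
qed

lemma Sig_symmetric: "transpose (Sig \<rho>) = Sig \<rho>"
proof -
  have "transpose (Sig \<rho>) = (\<integral>x. transpose (outer x x) \<partial>\<rho>)"
    unfolding Sig_def
    by (rule integral_linear[OF linear_transpose, symmetric])
      (intro integrable_continuous continuous_intros)
  then show ?thesis
    by (simp add: transpose_outer Sig_def)
qed

lemma integral_Wcond_id: "integral\<^sup>L (Wcond H \<rho> i) (\<lambda>x. x) = Sig \<rho> *v gam H i"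
proof -
  have "integral\<^sup>L (Wcond H \<rho> i) (\<lambda>x. x) = (\<integral>x. x + outer x x *v gam H i \<partial>\<rho>)"
    by (simp add: integral_Wcond[OF continuous_on_id] outer_mult_vec algebra_simps inner_commute)
  also have "\<dots> = (\<integral>x. outer x x *v gam H i \<partial>\<rho>)"
    by (subst Bochner_Integration.integral_add)
      (auto intro!: integrable_continuous continuous_intros simp: integral_rho_id outer_mult_vec)
  also have "\<dots> = Sig \<rho> *v gam H i"
    unfolding Sig_def
    by (rule integral_linear[OF linear_mult_vec_left]) (intro integrable_continuous continuous_intros)
  finally show ?thesis .
qed

lemma sum_Bmat: "(\<Sum>i\<in>UNIV. Bmat H \<rho> i) = real CARD('d) *\<^sub>R Sig \<rho>"
proof -
  have "(\<Sum>i\<in>UNIV. Bmat H \<rho> i) = (\<integral>x. (\<Sum>i\<in>UNIV. 1 + gam H i \<bullet> x) *\<^sub>R outer x x \<partial>\<rho>)"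
    unfolding Bmat_def scaleR_sum_left
    by (rule Bochner_Integration.integral_sum[symmetric]) (intro integrable_continuous continuous_intros)
  then show ?thesis
    by (simp add: sum_weights Sig_def)
qed

end

text \<open>The canonical estimator errs by \<open>(1/n) H \<Sum>\<^sub>m score H \<rho> (c m) (X m)\<close>.\<close>

definition score :: "real^'k^'d \<Rightarrow> (real^'k) measure \<Rightarrow> 'd \<Rightarrow> real^'k \<Rightarrow> real^'k" where
  "score H \<rho> i x = matrix_inv (Sig \<rho>) *v x - gam H i"

definition single_sample_risk :: "real^'k^'d \<Rightarrow> (real^'k) measure \<Rightarrow> 'd \<Rightarrow> real" where
  "single_sample_risk H \<rho> i =
     trace (matrix_inv (Sig \<rho>) ** Bmat H \<rho> i ** matrix_inv (Sig \<rho>)) - (real CARD('d) - 1) / real CARD('d)"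

locale anchored_law_invertible = anchored_law H \<rho> for H :: "real^'k^'d" and \<rho> +
  assumes invertible_Sig: "invertible (Sig \<rho>)"
begin

lemma Sig_inv_symmetric: "transpose (matrix_inv (Sig \<rho>)) = matrix_inv (Sig \<rho>)"
  by (rule transpose_matrix_inv_symmetric[OF invertible_Sig Sig_symmetric])

lemma integral_score: "integral\<^sup>L (Wcond H \<rho> i) (score H \<rho> i) = 0"
proof -
  interpret W: prob_space "Wcond H \<rho> i"
    by (rule prob_space_Wcond)
  have "integral\<^sup>L (Wcond H \<rho> i) (score H \<rho> i)
      = matrix_inv (Sig \<rho>) *v integral\<^sup>L (Wcond H \<rho> i) (\<lambda>x. x) - gam H i"
    unfolding score_def
    by (subst Bochner_Integration.integral_diff)
      (auto intro!: integrable_Wcond continuous_intros integral_linear matrix_vector_mul_linear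
        simp: W.prob_space)
  then show ?thesis
    by (simp add: integral_Wcond_id matrix_vector_mul_assoc matrix_inv_left[OF invertible_Sig])
qed

lemma integral_norm_score_sq:
  "(\<integral>x. (norm (score H \<rho> i x))\<^sup>2 \<partial>Wcond H \<rho> i) = single_sample_risk H \<rho> i"
proof -
  interpret W: prob_space "Wcond H \<rho> i"
    by (rule prob_space_Wcond)
  define A where "A = matrix_inv (Sig \<rho>)"
  define g where "g = gam H i"
  have "(\<integral>x. (norm (A *v x))\<^sup>2 \<partial>Wcond H \<rho> i) = (\<integral>x. trace (A ** ((1 + g \<bullet> x) *\<^sub>R outer x x) ** A) \<partial>\<rho>)"
    using Sig_inv_symmetric
    by (simp add: integral_Wcond continuous_intros g_def A_def power2_norm_eq_inner
        linear_cmul[OF linear_trace_mult_mult] trace_mult_outer_mult)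
  also have "\<dots> = trace (A ** Bmat H \<rho> i ** A)"
    unfolding Bmat_def g_def
    by (rule integral_linear[OF linear_trace_mult_mult]) (intro integrable_continuous continuous_intros)
  finally have second_moment: "(\<integral>x. (norm (A *v x))\<^sup>2 \<partial>Wcond H \<rho> i) = trace (A ** Bmat H \<rho> i ** A)" .
  have "A *v integral\<^sup>L (Wcond H \<rho> i) (\<lambda>x. x) = g"
    by (simp add: integral_Wcond_id A_def g_def matrix_vector_mul_assoc matrix_inv_left[OF invertible_Sig])
  moreover have "integral\<^sup>L (Wcond H \<rho> i) (\<lambda>x. A *v x) = A *v integral\<^sup>L (Wcond H \<rho> i) (\<lambda>x. x)"
    by (rule integral_linear[OF matrix_vector_mul_linear integrable_Wcond[OF continuous_on_id]])
  ultimately have cross_term: "(\<integral>x. g \<bullet> (A *v x) \<partial>Wcond H \<rho> i) = g \<bullet> g"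
    by (simp add: integrable_Wcond continuous_intros)
  have integrable_terms: "integrable (Wcond H \<rho> i) (\<lambda>x. (norm (A *v x))\<^sup>2)"
    "integrable (Wcond H \<rho> i) (\<lambda>x. g \<bullet> (A *v x))"
    by (auto intro!: integrable_Wcond continuous_intros)
  have "(\<integral>x. (norm (score H \<rho> i x))\<^sup>2 \<partial>Wcond H \<rho> i)
      = (\<integral>x. (norm (A *v x))\<^sup>2 - 2 * (g \<bullet> (A *v x)) + g \<bullet> g \<partial>Wcond H \<rho> i)"
    by (simp add: score_def A_def g_def power2_norm_eq_inner inner_diff_left inner_diff_right
        inner_commute algebra_simps)
  also have "\<dots> = trace (A ** Bmat H \<rho> i ** A) - g \<bullet> g"
    using integrable_terms by (simp add: Bochner_Integration.integral_add Bochner_Integration.integral_diff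
        second_moment cross_term W.prob_space)
  finally show ?thesis
    by (simp add: single_sample_risk_def A_def g_def inner_gam_self)
qed

lemma sum_single_sample_risk:
  "(\<Sum>i\<in>UNIV. single_sample_risk H \<rho> i)
     = real CARD('d) * (trace (matrix_inv (Sig \<rho>)) - (real CARD('d) - 1) / real CARD('d))"
proof -
  have "(\<Sum>i\<in>UNIV. trace (matrix_inv (Sig \<rho>) ** Bmat H \<rho> i ** matrix_inv (Sig \<rho>)))
      = real CARD('d) * trace (matrix_inv (Sig \<rho>))"
    by (simp add: linear_sum[OF linear_trace_mult_mult, symmetric] sum_Bmat
        linear_cmul[OF linear_trace_mult_mult] matrix_inv_left[OF invertible_Sig])
  then show ?thesis
    by (simp add: single_sample_risk_def sum_subtractf right_diff_distrib)
qed

end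

lemma sum_over_composition:
  fixes F :: "'d::finite \<Rightarrow> 'v::real_vector"
  assumes "composition n \<theta> c"
  shows "(\<Sum>m<n. F (c m)) = (\<Sum>i\<in>UNIV. (real n * \<theta>$i) *\<^sub>R F i)"
proof -
  have "(\<Sum>m<n. F (c m)) = (\<Sum>i\<in>UNIV. \<Sum>m\<in>{m. m \<in> {..<n} \<and> c m = i}. F (c m))"
    by (rule sum.group[symmetric]) auto
  also have "\<dots> = (\<Sum>i\<in>UNIV. real (card {m. m < n \<and> c m = i}) *\<^sub>R F i)"
    by (rule sum.cong) (auto simp: sum_constant_scaleR)
  finally show ?thesis
    using assms by (simp add: composition_def)
qed

lemma composition_exists:
  fixes \<theta> :: "real^'d"
  assumes "admissible n \<theta>"
  shows "\<exists>c. composition n \<theta> c"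
proof -
  have "\<exists>k::nat. real k = real n * \<theta>$i" for i
  proof -
    have "real n * \<theta>$i \<in> \<int>"
      using assms by (simp add: admissible_def)
    then obtain z where "real n * \<theta>$i = of_int z"
      by (rule Ints_cases)
    moreover have "0 \<le> real n * \<theta>$i"
      using assms by (simp add: admissible_def)
    ultimately show ?thesis
      by (intro exI[of _ "nat z"]) simp
  qed
  then obtain k where k: "\<And>i. real (k i) = real n * \<theta>$i"
    by metis
  obtain ds where "set ds = (UNIV :: 'd set)" and "distinct ds"
    using finite_distinct_list[OF finite] by blast
  define xs where "xs = concat (map (\<lambda>i. replicate (k i) i) ds)"
  have count_replicate: "length (filter (\<lambda>x. x = i) (replicate m j)) = (if j = i then m else 0)"
    for i j m
    by (induction m) auto
  have count: "length (filter (\<lambda>x. x = i) xs) = k i" for i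
    using \<open>set ds = UNIV\<close> \<open>distinct ds\<close>
    by (simp add: xs_def filter_concat length_concat comp_def sum_list_distinct_conv_sum_set
        count_replicate)
  have "real (length xs) = (\<Sum>i\<in>UNIV. real n * \<theta>$i)"
    using \<open>set ds = UNIV\<close> \<open>distinct ds\<close>
    by (simp add: xs_def length_concat comp_def sum_list_distinct_conv_sum_set flip: k)
  then have "length xs = n"
    using assms by (simp add: admissible_def flip: sum_distrib_left)
  then have "card {m. m < n \<and> xs ! m = i} = k i" for i
    using count[of i] by (simp add: length_filter_conv_card)
  then have "composition n \<theta> (\<lambda>m. xs ! m)"
    by (simp add: composition_def k)
  then show ?thesis
    by blast
qed

context sum_zero_basis
begin

lemma est_eq_score_sum:
  assumes "n \<ge> 1" and "(\<Sum>i\<in>UNIV. \<theta>$i) = 1" and "composition n \<theta> c"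
  shows "est H \<rho> n X = \<theta> + (1 / real n) *\<^sub>R (H *v (\<Sum>m<n. score H \<rho> (c m) (X m)))"
proof -
  define A where "A = matrix_inv (Sig \<rho>)"
  define X_bar where "X_bar = (1 / real n) *\<^sub>R (\<Sum>m<n. X m)"
  have "(\<Sum>m<n. gam H (c m)) = real n *\<^sub>R (transpose H *v \<theta>)"
    using sum_over_composition[OF assms(3), of "gam H"]
    by (simp add: transpose_mult_vec_eq_sum_gam scaleR_sum_right del: transpose_matrix_vector)
  then have "(1 / real n) *\<^sub>R (\<Sum>m<n. score H \<rho> (c m) (X m)) = A *v X_bar - transpose H *v \<theta>"
    using assms(1)
    by (simp add: score_def A_def X_bar_def sum_subtractf scaleR_diff_right matrix_vector_mult_scaleR
        linear_sum[OF matrix_vector_mul_linear, symmetric] del: transpose_matrix_vector)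
  then have "(1 / real n) *\<^sub>R (H *v (\<Sum>m<n. score H \<rho> (c m) (X m)))
      = H *v (A *v X_bar) - (\<theta> - (1 / real CARD('d)) *\<^sub>R (\<chi> i. 1))"
    using assms(2)
    by (simp add: matrix_vector_mult_scaleR[symmetric] matrix_vector_mult_diff_distrib
        H_mult_transpose_H_mult del: transpose_matrix_vector)
  then show ?thesis
    by (simp add: est_def A_def X_bar_def vec_eq_iff)
qed

end

lemma admissible_axis: "admissible n (axis i 1)"
  by (simp add: admissible_def axis_def)

lemma SUP_admissible_inner:
  fixes a :: "real^'d"
  shows "(SUP \<theta>\<in>{\<theta>. admissible n \<theta>}. a \<bullet> \<theta>) = Max (range (\<lambda>i. a$i))"
proof (rule cSup_eq_maximum)
  have "Max (range (\<lambda>i. a$i)) \<in> range (\<lambda>i. a$i)"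
    by (rule Max_in) auto
  then obtain i where "Max (range (\<lambda>i. a$i)) = a$i"
    by blast
  also have "\<dots> = a \<bullet> axis i 1"
    by (simp add: inner_axis)
  finally show "Max (range (\<lambda>i. a$i)) \<in> (\<lambda>\<theta>. a \<bullet> \<theta>) ` {\<theta>. admissible n \<theta>}"
    using admissible_axis by blast
  show "x \<le> Max (range (\<lambda>i. a$i))" if x_in: "x \<in> (\<lambda>\<theta>. a \<bullet> \<theta>) ` {\<theta>. admissible n \<theta>}" for x
  proof -
    obtain \<theta> where \<theta>: "admissible n \<theta>" and x: "x = a \<bullet> \<theta>"
      using x_in by blast
    have "a \<bullet> \<theta> = (\<Sum>j\<in>UNIV. a$j * \<theta>$j)"
      by (simp add: inner_vec_def)
    also have "\<dots> \<le> (\<Sum>j\<in>UNIV. Max (range (\<lambda>i. a$i)) * \<theta>$j)"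
      using \<theta> by (intro sum_mono mult_right_mono) (auto simp: admissible_def)
    also have "\<dots> = Max (range (\<lambda>i. a$i))"
      using \<theta> by (simp add: admissible_def flip: sum_distrib_left)
    finally show ?thesis
      using x by simp
  qed
qed

context anchored_law_invertible
begin

lemma continuous_on_score: "continuous_on UNIV (score H \<rho> i)"
  unfolding score_def by (intro continuous_intros)

lemma prob_space_fc_law: "prob_space (fc_law H \<rho> n c)"
  unfolding fc_law_def by (intro prob_space_PiM prob_space_Wcond)

context
  fixes n :: nat and \<theta> :: "real^'d" and c :: "nat \<Rightarrow> 'd"
  assumes n_ge_1: "n \<ge> 1" and sum_\<theta>: "(\<Sum>i\<in>UNIV. \<theta>$i) = 1"
    and composition: "composition n \<theta> c"
begin

lemma
  shows integrable_est: "integrable (fc_law H \<rho> n c) (est H \<rho> n)"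
    and integral_est: "integral\<^sup>L (fc_law H \<rho> n c) (est H \<rho> n) = \<theta>"
proof -
  interpret P: prob_space "fc_law H \<rho> n c"
    by (rule prob_space_fc_law)
  define L where "L v = (1 / real n) *\<^sub>R (H *v v)" for v :: "real^'k"
  have L: "bounded_linear L"
    unfolding L_def
    by (intro bounded_linear_compose[OF bounded_linear_scaleR_right] matrix_vector_mul_bounded_linear)
  have score_integrable: "integrable (Wcond H \<rho> (c m)) (score H \<rho> (c m))" for m
    by (rule integrable_Wcond[OF continuous_on_score])
  have "integrable (fc_law H \<rho> n c) (\<lambda>X. score H \<rho> (c m) (X m))"
    and "(\<integral>X. score H \<rho> (c m) (X m) \<partial>fc_law H \<rho> n c) = 0" if "m < n" for m
    using integrable_PiM_component[where M="\<lambda>m. Wcond H \<rho> (c m)", OF prob_space_Wcond _ score_integrable]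
      integral_PiM_component[where M="\<lambda>m. Wcond H \<rho> (c m)", OF prob_space_Wcond _ score_integrable]
      that by (simp_all add: fc_law_def integral_score)
  then have sum_integrable: "integrable (fc_law H \<rho> n c) (\<lambda>X. \<Sum>m<n. score H \<rho> (c m) (X m))"
    and sum_integral: "(\<integral>X. (\<Sum>m<n. score H \<rho> (c m) (X m)) \<partial>fc_law H \<rho> n c) = 0"
    by (auto intro!: Bochner_Integration.integrable_sum simp: Bochner_Integration.integral_sum)
  have est: "est H \<rho> n = (\<lambda>X. \<theta> + L (\<Sum>m<n. score H \<rho> (c m) (X m)))"
    using est_eq_score_sum[OF n_ge_1 sum_\<theta> composition] by (simp add: L_def fun_eq_iff)
  show "integrable (fc_law H \<rho> n c) (est H \<rho> n)"
    unfolding est using integrable_bounded_linear[OF L sum_integrable] by simp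
  show "integral\<^sup>L (fc_law H \<rho> n c) (est H \<rho> n) = \<theta>"
    unfolding est
    using integrable_bounded_linear[OF L sum_integrable] integral_bounded_linear[OF L sum_integrable]
    by (simp add: sum_integral P.prob_space L_def)
qed

lemma
  shows integrable_sq_err: "integrable (fc_law H \<rho> n c) (\<lambda>X. (norm (est H \<rho> n X - \<theta>))\<^sup>2)"
    and fc_risk_eq: "fc_risk H \<rho> n \<theta> c = (1 / real n) * (\<Sum>i\<in>UNIV. \<theta>$i * single_sample_risk H \<rho> i)"
proof -
  have sq_err: "(\<lambda>X. (norm (est H \<rho> n X - \<theta>))\<^sup>2)
      = (\<lambda>X. (1 / real n)\<^sup>2 * (norm (\<Sum>m<n. score H \<rho> (c m) (X m)))\<^sup>2)"
    using est_eq_score_sum[OF n_ge_1 sum_\<theta> composition]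
    by (simp add: fun_eq_iff norm_H_mult_vec power_divide)
  have score_sq_integrable: "integrable (Wcond H \<rho> i) (\<lambda>x. (norm (score H \<rho> i x))\<^sup>2)" for i
    by (intro integrable_Wcond continuous_intros continuous_on_score)
  note sum_sq = integrable_PiM_norm_sum_sq integral_PiM_norm_sum_sq
  note sum_sq = sum_sq[where M="\<lambda>m. Wcond H \<rho> (c m)" and I="{..<n}" and F="\<lambda>m. score H \<rho> (c m)",
      OF prob_space_Wcond finite_lessThan integrable_Wcond[OF continuous_on_score]
      score_sq_integrable integral_score]
  show "integrable (fc_law H \<rho> n c) (\<lambda>X. (norm (est H \<rho> n X - \<theta>))\<^sup>2)"
    unfolding sq_err fc_law_def using sum_sq(1) by simp
  have "fc_risk H \<rho> n \<theta> c = (1 / real n)\<^sup>2 * (\<Sum>m<n. single_sample_risk H \<rho> (c m))"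
    unfolding fc_risk_def sq_err fc_law_def by (simp add: sum_sq(2) integral_norm_score_sq)
  also have "\<dots> = (1 / real n) * (\<Sum>i\<in>UNIV. \<theta>$i * single_sample_risk H \<rho> i)"
    using n_ge_1 by (simp add: sum_over_composition[OF composition] sum_distrib_left power2_eq_square)
  finally show "fc_risk H \<rho> n \<theta> c = (1 / real n) * (\<Sum>i\<in>UNIV. \<theta>$i * single_sample_risk H \<rho> i)" .
qed

end

lemma R_fc_eq:
  assumes "n \<ge> 1" and "admissible n \<theta>"
  shows "R_fc H \<rho> n \<theta> = (1 / real n) * (\<Sum>i\<in>UNIV. \<theta>$i * single_sample_risk H \<rho> i)"
  unfolding R_fc_def
  using assms someI_ex[OF composition_exists[OF assms(2)]]
  by (intro fc_risk_eq) (simp_all add: admissible_def)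

lemma R_fc_axis:
  assumes "n \<ge> 1"
  shows "R_fc H \<rho> n (axis i 1) = single_sample_risk H \<rho> i / real n"
proof -
  have "(\<Sum>j\<in>UNIV. axis i 1 $ j * single_sample_risk H \<rho> j) = (\<chi> j. single_sample_risk H \<rho> j) \<bullet> axis i 1"
    by (simp add: inner_vec_def mult.commute)
  then show ?thesis
    using R_fc_eq[OF assms admissible_axis] by (simp add: inner_axis)
qed

end

theorem proposition5p3:
  fixes H :: "real^'k^'d" and \<rho> :: "(real^'k) measure" and n :: nat and \<theta> :: "real^'d"
  assumes "CARD('d) = CARD('k) + 1" and "CARD('d) \<ge> 2"
    and "\<forall>j j'. column j H \<bullet> column j' H = (if j = j' then 1 else 0)"
    and "span (columns H) = {u. (\<Sum>i\<in>UNIV. u$i) = 0}"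
    and "anchored H \<rho>"
    and "invertible (Sig \<rho>)"
    and "n \<ge> 1"
    and "admissible n \<theta>"
  shows "(\<forall>c. composition n \<theta> c \<longrightarrow>
            integrable (fc_law H \<rho> n c) (est H \<rho> n) \<and>
            integral\<^sup>L (fc_law H \<rho> n c) (est H \<rho> n) = \<theta> \<and>
            integrable (fc_law H \<rho> n c) (\<lambda>X. (norm (est H \<rho> n X - \<theta>))\<^sup>2) \<and>
            fc_risk H \<rho> n \<theta> c =
              (1 / real n) * (\<Sum>i\<in>UNIV. \<theta>$i *
                 (trace (matrix_inv (Sig \<rho>) ** Bmat H \<rho> i ** matrix_inv (Sig \<rho>))
                  - (real CARD('d) - 1) / real CARD('d))))
       \<and> (\<exists>a b. \<forall>\<theta>'. admissible n \<theta>' \<longrightarrow> R_fc H \<rho> n \<theta>' = a \<bullet> \<theta>' + b)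
       \<and> (SUP \<theta>'\<in>{\<theta>'. admissible n \<theta>'}. R_fc H \<rho> n \<theta>')
            = Max (range (\<lambda>i. R_fc H \<rho> n (axis i 1)))
       \<and> (1 / real CARD('d)) * (\<Sum>i\<in>UNIV. R_fc H \<rho> n (axis i 1))
            = (1 / real n) * (trace (matrix_inv (Sig \<rho>)) - (real CARD('d) - 1) / real CARD('d))"
proof -
  interpret anchored_law_invertible H \<rho>
    using assms(3-6) by unfold_locales
  define a where "a = (\<chi> i. single_sample_risk H \<rho> i / real n)"
  have R_fc_affine: "R_fc H \<rho> n \<theta>' = a \<bullet> \<theta>'" if "admissible n \<theta>'" for \<theta>'
    using R_fc_eq[OF assms(7) that] by (simp add: a_def inner_vec_def sum_distrib_left mult_ac)
  have "(SUP \<theta>'\<in>{\<theta>'. admissible n \<theta>'}. R_fc H \<rho> n \<theta>') = (SUP \<theta>'\<in>{\<theta>'. admissible n \<theta>'}. a \<bullet> \<theta>')"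
    using R_fc_affine by (intro SUP_cong) auto
  also have "\<dots> = Max (range (\<lambda>i. a $ i))"
    by (rule SUP_admissible_inner)
  also have "\<dots> = Max (range (\<lambda>i. R_fc H \<rho> n (axis i 1)))"
    using R_fc_axis[OF assms(7)] by (simp add: a_def)
  finally have "(SUP \<theta>'\<in>{\<theta>'. admissible n \<theta>'}. R_fc H \<rho> n \<theta>') = Max (range (\<lambda>i. R_fc H \<rho> n (axis i 1)))" .
  moreover have "\<exists>a b. \<forall>\<theta>'. admissible n \<theta>' \<longrightarrow> R_fc H \<rho> n \<theta>' = a \<bullet> \<theta>' + b"
    using R_fc_affine by (intro exI[of _ a] exI[of _ 0]) simp
  moreover have "(1 / real CARD('d)) * (\<Sum>i\<in>UNIV. R_fc H \<rho> n (axis i 1))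
      = (1 / real n) * (trace (matrix_inv (Sig \<rho>)) - (real CARD('d) - 1) / real CARD('d))"
    by (simp add: R_fc_axis[OF assms(7)] sum_single_sample_risk flip: sum_divide_distrib)
  moreover have "(\<Sum>i\<in>UNIV. \<theta>$i) = 1"
    using assms(8) by (simp add: admissible_def)
  ultimately show ?thesis
    using assms(7) integrable_est integral_est integrable_sq_err fc_risk_eq
    unfolding single_sample_risk_def by blast
qed

end
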